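(* For integers $m\geq 5$ odd and $n\geq 3$, $\chi_{ld}(C_{m}[\overline{K_{n}}])=3$.
   Context: All graphs are finite, simple and undirected. For a graph $G=(V,E)$ of order $N$ without isolated vertices, a bijection $f\colon V\to\{1,2,\dots,N\}$ is a local distance antimagic labeling if $w(u)\neq w(v)$ for every edge $uv$, where $w(u)=\sum_{x\in N(u)}f(x)$ and $N(u)$ is the open neighborhood of $u$. $\chi_{ld}(G)$ is the minimum number of distinct weights over all local distance antimagic labelings of $G$. $C_m$ is the cycle on $m$ vertices, $\overline{K_n}$ the edgeless graph on $n$ vertices. The lexicographic product $G[H]$ has vertex set $V(G)\times V(H)$, with $(g,h)$ adjacent to $(g',h')$ iff $gg'\in E(G)$, or $g=g'$ and $hh'\in E(H)$. *)

theory Defs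
  imports Main
begin

text \<open>A finite simple graph is given by a finite vertex set V and an adjacency
  relation E (symmetric, irreflexive, within V).\<close>

definition nbhd :: "'a set \<Rightarrow> ('a \<Rightarrow> 'a \<Rightarrow> bool) \<Rightarrow> 'a \<Rightarrow> 'a set" where
  "nbhd V E u = {x \<in> V. E u x}"

definition weight :: "'a set \<Rightarrow> ('a \<Rightarrow> 'a \<Rightarrow> bool) \<Rightarrow> ('a \<Rightarrow> nat) \<Rightarrow> 'a \<Rightarrow> nat" where
  "weight V E f u = (\<Sum>x\<in>nbhd V E u. f x)"

definition ld_labeling :: "'a set \<Rightarrow> ('a \<Rightarrow> 'a \<Rightarrow> bool) \<Rightarrow> ('a \<Rightarrow> nat) \<Rightarrow> bool" where
  "ld_labeling V E f \<longleftrightarrow> bij_betw f V {1..card V} \<and>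
     (\<forall>u\<in>V. \<forall>v\<in>V. E u v \<longrightarrow> weight V E f u \<noteq> weight V E f v)"

definition chi_ld :: "'a set \<Rightarrow> ('a \<Rightarrow> 'a \<Rightarrow> bool) \<Rightarrow> nat" where
  "chi_ld V E = (LEAST k. \<exists>f. ld_labeling V E f \<and> card (weight V E f ` V) = k)"

definition cycle_adj :: "nat \<Rightarrow> nat \<Rightarrow> nat \<Rightarrow> bool" where
  "cycle_adj m i j \<longleftrightarrow> i < m \<and> j < m \<and> ((i + 1) mod m = j \<or> (j + 1) mod m = i)"

definition lex_adj :: "('a \<Rightarrow> 'a \<Rightarrow> bool) \<Rightarrow> ('b \<Rightarrow> 'b \<Rightarrow> bool) \<Rightarrow> 'a \<times> 'b \<Rightarrow> 'a \<times> 'b \<Rightarrow> bool" where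
  "lex_adj EG EH p q \<longleftrightarrow> EG (fst p) (fst q) \<or> (fst p = fst q \<and> EH (snd p) (snd q))"

definition empty_adj :: "nat \<Rightarrow> nat \<Rightarrow> bool" where
  "empty_adj i j \<longleftrightarrow> False"

end

theory Submission
  imports Defs
begin

(* In C_m[K_n-bar] the vertex (i, j) is adjacent to exactly the two fibres over i + 1 and
   i - 1, so its weight depends on i alone; any local distance antimagic labeling therefore
   induces a proper colouring of the odd cycle C_m by weights, which needs three values.

   Conversely, label (i, j) by m j + s_j(i) + 1 with permutations s_j of {0..<m}. Together
   with the identity, the rows s_1, ..., s_(n-1) are chosen to have constant column sums
   (pairs i, m - 1 - i, and for odd n also the triple i, i + (m - 1)/2, -1 - 2i mod m).
   Taking for s_0 the permutation swapping 4q and 4q + 1 instead of the identity perturbs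
   the column sums periodically by +1, -1, 0, 0, and the weight of (i, j) becomes
   c + weight_offset m i, which alternates between -1 and 1 except at the last two
   positions, where it is 0 and 1 in some order. *)

lemma nbhd_lex_empty:
  "nbhd (VG \<times> H) (lex_adj EG empty_adj) (g, h) = nbhd VG EG g \<times> H"
  by (auto simp: nbhd_def lex_adj_def empty_adj_def)

lemma weight_lex_empty:
  "weight (VG \<times> H) (lex_adj EG empty_adj) f (g, h) = (\<Sum>g'\<in>nbhd VG EG g. \<Sum>h'\<in>H. f (g', h'))"
  by (simp add: weight_def nbhd_lex_empty sum.cartesian_product)

lemma weight_image_lex_empty:
  assumes "h \<in> H"
  shows "weight (VG \<times> H) (lex_adj EG empty_adj) f ` (VG \<times> H)
    = (\<lambda>g. weight (VG \<times> H) (lex_adj EG empty_adj) f (g, h)) ` VG"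
  using assms by (force simp: weight_lex_empty)

lemma nbhd_cycle:
  assumes "i < m"
  shows "nbhd {0..<m} (cycle_adj m) i = {(i + 1) mod m, (i + m - 1) mod m}"
proof -
  have "(x + 1) mod m = i \<longleftrightarrow> x = (i + m - 1) mod m" if "x < m" for x
    using assms that by (cases "x + 1 = m"; cases "i = 0") (auto simp: le_mod_geq)
  then show ?thesis using assms by (auto simp: nbhd_def cycle_adj_def)
qed

lemma cycle_succ_ne_pred:
  fixes m i :: nat
  assumes "3 \<le> m" "i < m"
  shows "(i + 1) mod m \<noteq> (i + m - 1) mod m"
  using assms by (cases "i = 0"; cases "i + 1 = m") (auto simp: le_mod_geq)

lemma weight_cycle_lex_empty:
  assumes "3 \<le> m" "i < m"
  shows "weight ({0..<m} \<times> H) (lex_adj (cycle_adj m) empty_adj) f (i, j)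
    = (\<Sum>h\<in>H. f ((i + 1) mod m, h)) + (\<Sum>h\<in>H. f ((i + m - 1) mod m, h))"
  using cycle_succ_ne_pred[OF assms] by (simp add: weight_lex_empty nbhd_cycle[OF assms(2)])

lemma odd_cycle_colouring_three_values:
  fixes c :: "nat \<Rightarrow> 'b"
  assumes "odd m" and proper: "\<And>i. i < m \<Longrightarrow> c i \<noteq> c ((i + 1) mod m)"
  shows "3 \<le> card (c ` {0..<m})"
proof (rule ccontr)
  assume "\<not> 3 \<le> card (c ` {0..<m})"
  then have few: "card (c ` {0..<m}) \<le> 2" by simp
  have "m \<noteq> 1" using proper[of 0] by auto
  with \<open>odd m\<close> have "2 \<le> m" by presburger
  have c01: "c 0 \<noteq> c 1" using proper[of 0] \<open>2 \<le> m\<close> by simp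
  have two_values: "c i \<in> {c 0, c 1}" if "i < m" for i
  proof (rule ccontr)
    assume "c i \<notin> {c 0, c 1}"
    then have "card {c 0, c 1, c i} = 3" using c01 by auto
    moreover have "{c 0, c 1, c i} \<subseteq> c ` {0..<m}" using \<open>2 \<le> m\<close> that by auto
    moreover have "card {c 0, c 1, c i} \<le> card (c ` {0..<m})"
      using calculation(2) by (rule card_mono[rotated]) simp
    ultimately show False using few by simp
  qed
  have alternating: "c i = (if even i then c 0 else c 1)" if "i < m" for i
    using that
  proof (induction i)
    case (Suc i)
    then have "c (Suc i) \<noteq> c i" using proper[of i] by simp
    then show ?case using Suc two_values[of "Suc i"] by auto
  qed simp
  have "c (m - 1) = c 0" using alternating[of "m - 1"] \<open>odd m\<close> \<open>2 \<le> m\<close> by simp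
  then show False using proper[of "m - 1"] \<open>2 \<le> m\<close> by simp
qed

lemma card_weights_odd_cycle_lex_empty_ge:
  assumes "odd m" "3 \<le> m" "0 < n"
    and ld: "ld_labeling ({0..<m} \<times> {0..<n}) (lex_adj (cycle_adj m) empty_adj) f"
  shows "3 \<le> card (weight ({0..<m} \<times> {0..<n}) (lex_adj (cycle_adj m) empty_adj) f
    ` ({0..<m} \<times> {0..<n}))"
proof -
  let ?V = "{0..<m} \<times> {0..<n}" and ?E = "lex_adj (cycle_adj m) empty_adj"
  define c where "c i = weight ?V ?E f (i, 0)" for i
  have "c i \<noteq> c ((i + 1) mod m)" if "i < m" for i
  proof -
    have "?E (i, 0) ((i + 1) mod m, 0)"
      using that \<open>3 \<le> m\<close> by (simp add: lex_adj_def cycle_adj_def)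
    moreover have "(i, 0) \<in> ?V" "((i + 1) mod m, 0) \<in> ?V" using that \<open>0 < n\<close> by auto
    ultimately show ?thesis using ld unfolding ld_labeling_def c_def by blast
  qed
  then have "3 \<le> card (c ` {0..<m})"
    using odd_cycle_colouring_three_values \<open>odd m\<close> by blast
  moreover have "weight ?V ?E f ` ?V = c ` {0..<m}"
    unfolding c_def by (rule weight_image_lex_empty) (use \<open>0 < n\<close> in simp)
  ultimately show ?thesis by simp
qed

lemma bij_betw_lessThan_endo:
  fixes f :: "nat \<Rightarrow> nat"
  assumes "\<And>i. i < m \<Longrightarrow> f i < m" and "inj_on f {0..<m}"
  shows "bij_betw f {0..<m} {0..<m}"
  using assms endo_inj_surj[of "{0..<m}" f] by (simp add: bij_betw_def image_subset_iff)

definition pair_swap :: "nat \<Rightarrow> nat \<Rightarrow> nat" where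
  "pair_swap m i = (if i mod 4 = 0 \<and> i + 1 < m then i + 1 else if i mod 4 = 1 then i - 1 else i)"

lemma bij_pair_swap: "bij_betw (pair_swap m) {0..<m} {0..<m}"
proof (rule bij_betw_lessThan_endo)
  have "pair_swap m (pair_swap m i) = i" if "i < m" for i
  proof -
    have "i mod 4 = 1 \<Longrightarrow> 0 < i \<and> (i - 1) mod 4 = 0" by presburger
    moreover have "i mod 4 = 0 \<Longrightarrow> (i + 1) mod 4 = 1" by presburger
    ultimately show ?thesis using that by (auto simp: pair_swap_def)
  qed
  then show "inj_on (pair_swap m) {0..<m}" by (metis atLeastLessThan_iff inj_on_inverseI)
qed (auto simp: pair_swap_def)

(* For m = 2h + 1 these are the permutations i \<mapsto> i + h and i \<mapsto> -1 - 2i of Z/mZ. *)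
definition half_shift :: "nat \<Rightarrow> nat \<Rightarrow> nat" where
  "half_shift m i = (if i \<le> m div 2 then i + m div 2 else i - m div 2 - 1)"

definition double_reflect :: "nat \<Rightarrow> nat \<Rightarrow> nat" where
  "double_reflect m i = (if i \<le> m div 2 then 2 * (m div 2) - 2 * i else m + 2 * (m div 2) - 2 * i)"

lemma bij_half_shift: "odd m \<Longrightarrow> bij_betw (half_shift m) {0..<m} {0..<m}"
  by (rule bij_betw_lessThan_endo) (auto simp: half_shift_def inj_on_def elim!: oddE)

lemma bij_double_reflect:
  assumes "odd m"
  shows "bij_betw (double_reflect m) {0..<m} {0..<m}"
proof (rule bij_betw_lessThan_endo)
  obtain h where m: "m = 2 * h + 1" using \<open>odd m\<close> by (blast elim: oddE)
  show "double_reflect m i < m" if "i < m" for i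
    using that by (auto simp: double_reflect_def m)
  have parity: "even (double_reflect m i) \<longleftrightarrow> i \<le> h" if "i < m" for i
    using that by (auto simp: double_reflect_def m)
  show "inj_on (double_reflect m) {0..<m}"
  proof (rule inj_onI)
    fix x y assume xy: "x \<in> {0..<m}" "y \<in> {0..<m}" "double_reflect m x = double_reflect m y"
    then have "x \<le> h \<longleftrightarrow> y \<le> h" using parity by (metis atLeastLessThan_iff)
    then show "x = y" using xy by (auto simp: double_reflect_def m split: if_splits)
  qed
qed

lemma sum_half_shift_double_reflect:
  assumes "odd m" "i < m"
  shows "i + half_shift m i + double_reflect m i = 3 * (m div 2)"
  using assms by (auto simp: half_shift_def double_reflect_def elim!: oddE)

definition balanced_row :: "nat \<Rightarrow> nat \<Rightarrow> nat \<Rightarrow> nat \<Rightarrow> nat" where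
  "balanced_row m n j i =
    (if odd n \<and> j = 1 then half_shift m i
     else if odd n \<and> j = 2 then double_reflect m i
     else if even j then i else m - 1 - i)"

lemma bij_balanced_row:
  assumes "odd m"
  shows "bij_betw (balanced_row m n j) {0..<m} {0..<m}"
proof -
  have "bij_betw ((-) (m - 1)) {0..<m} {0..<m}"
    by (rule bij_betw_lessThan_endo) (auto simp: inj_on_def)
  moreover have "bij_betw (\<lambda>i. i) {0..<m} {0..<m}" by (simp add: bij_betw_def)
  moreover have "balanced_row m n j = (if odd n \<and> j = 1 then half_shift m
      else if odd n \<and> j = 2 then double_reflect m else if even j then (\<lambda>i. i) else (\<lambda>i. m - 1 - i))"
    by (simp add: balanced_row_def fun_eq_iff)
  ultimately show ?thesis
    using bij_half_shift[OF assms] bij_double_reflect[OF assms] by (simp split: if_split)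
qed

lemma sum_balanced_rows_add_pairs:
  assumes "odd n \<longrightarrow> 3 \<le> s" "i < m"
  shows "(\<Sum>j<s + 2 * t. balanced_row m n j i) = (\<Sum>j<s. balanced_row m n j i) + t * (m - 1)"
proof (induction t)
  case (Suc t)
  have "balanced_row m n (s + 2 * t) i + balanced_row m n (Suc (s + 2 * t)) i = m - 1"
    using assms by (auto simp: balanced_row_def)
  then show ?case using Suc by (simp add: add.commute)
qed simp

lemma sum_balanced_rows:
  assumes "odd m" "2 \<le> n" "i < m"
  shows "(\<Sum>j<n. balanced_row m n j i)
    = (if odd n then 3 * (m div 2) + (n - 3) div 2 * (m - 1) else n div 2 * (m - 1))"
proof (cases "odd n")
  case True
  then have n: "n = 3 + 2 * ((n - 3) div 2)" using assms by presburger
  have "(\<Sum>j<3. balanced_row m n j i) = i + half_shift m i + double_reflect m i"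
    using True by (simp add: balanced_row_def numeral_3_eq_3)
  then show ?thesis
    using True sum_half_shift_double_reflect[OF assms(1,3)] n
      sum_balanced_rows_add_pairs[of n 3 i m "(n - 3) div 2"] assms
    by simp
next
  case False
  then show ?thesis
    using sum_balanced_rows_add_pairs[of n 0 i m "n div 2"] assms by simp
qed

definition row_labeling :: "nat \<Rightarrow> (nat \<Rightarrow> nat \<Rightarrow> nat) \<Rightarrow> nat \<times> nat \<Rightarrow> nat" where
  "row_labeling m \<sigma> p = m * snd p + \<sigma> (snd p) (fst p) + 1"

lemma bij_row_labeling:
  assumes "\<And>j. j < n \<Longrightarrow> bij_betw (\<sigma> j) {0..<m} {0..<m}"
  shows "bij_betw (row_labeling m \<sigma>) ({0..<m} \<times> {0..<n}) {1..m * n}"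
proof -
  have lt: "\<sigma> j i < m" if "i < m" "j < n" for i j
    using assms[OF that(2)] that(1) by (auto simp: bij_betw_def)
  have inj: "inj_on (row_labeling m \<sigma>) ({0..<m} \<times> {0..<n})"
  proof (rule inj_onI)
    fix p q
    assume "p \<in> {0..<m} \<times> {0..<n}" "q \<in> {0..<m} \<times> {0..<n}"
      and "row_labeling m \<sigma> p = row_labeling m \<sigma> q"
    moreover obtain i j i' j' where p: "p = (i, j)" and q: "q = (i', j')" by fastforce
    ultimately have ij: "i < m" "j < n" "i' < m" "j' < n"
      and eq: "m * j + \<sigma> j i = m * j' + \<sigma> j' i'" by (auto simp: row_labeling_def)
    have "j = (m * j + \<sigma> j i) div m" "j' = (m * j' + \<sigma> j' i') div m"
      using lt ij by simp_all
    then have "j = j'" using eq by simp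
    then show "p = q"
      using eq assms[of j] ij p q by (auto simp: bij_betw_def inj_on_def)
  qed
  have "row_labeling m \<sigma> (i, j) \<in> {1..m * n}" if "i < m" "j < n" for i j
  proof -
    have "m * j + \<sigma> j i + 1 \<le> m * (j + 1)" using lt[OF that] by simp
    also have "\<dots> \<le> m * n" using \<open>j < n\<close> by (simp del: mult_Suc_right)
    finally show ?thesis by (simp add: row_labeling_def)
  qed
  then have "row_labeling m \<sigma> ` ({0..<m} \<times> {0..<n}) \<subseteq> {1..m * n}" by auto
  moreover have "card (row_labeling m \<sigma> ` ({0..<m} \<times> {0..<n})) = m * n"
    using inj by (simp add: card_image card_cartesian_product)
  ultimately show ?thesis using inj by (simp add: bij_betw_def card_subset_eq)
qed

lemma sum_row_labeling_column:
  "(\<Sum>j<n. row_labeling m \<sigma> (k, j)) = (\<Sum>j<n. m * j + 1) + (\<Sum>j<n. \<sigma> j k)"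
  by (simp add: row_labeling_def sum.distrib[symmetric])

definition weight_offset :: "nat \<Rightarrow> nat \<Rightarrow> int" where
  "weight_offset m i =
    (if i + 1 = m then (if m mod 4 = 1 then 1 else 0)
     else if i + 2 = m then (if m mod 4 = 1 then 0 else 1)
     else if even i then -1 else 1)"

lemma weight_offset_range: "weight_offset m i \<in> {-1, 0, 1}"
  by (simp add: weight_offset_def)

lemma weight_offset_succ_ne:
  assumes "odd m" "3 \<le> m" "i < m"
  shows "weight_offset m i \<noteq> weight_offset m ((i + 1) mod m)"
proof (cases "i + 1 = m")
  case True
  then show ?thesis using assms by (simp add: weight_offset_def)
next
  case False
  then show ?thesis using assms unfolding weight_offset_def by simp presburger
qed

lemma pair_swap_displacement:
  "int (pair_swap m k) - int k = (if k mod 4 = 0 \<and> k + 1 < m then 1 else if k mod 4 = 1 then -1 else 0)"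
  by (auto simp: pair_swap_def)

lemma pair_swap_neighbour_displacements:
  assumes "odd m" "3 \<le> m" "i < m"
  shows "(int (pair_swap m ((i + 1) mod m)) - int ((i + 1) mod m))
       + (int (pair_swap m ((i + m - 1) mod m)) - int ((i + m - 1) mod m)) = weight_offset m i"
proof -
  consider "i = 0" | "i + 1 = m" | "0 < i" "i + 1 < m" using assms by linarith
  then show ?thesis
  proof cases
    case 1
    define l where "l = m - 1"
    have l: "m = l + 1" using assms by (simp add: l_def)
    have "l mod 4 = 0 \<or> l mod 4 = 2" using \<open>odd m\<close> unfolding l by presburger
    then show ?thesis using 1 assms unfolding l pair_swap_displacement weight_offset_def by auto
  next
    case 2
    define l where "l = m - 2"
    have l: "m = l + 2" "i = l + 1" using 2 assms by (simp_all add: l_def)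
    have "(i + 1) mod m = 0" "(i + m - 1) mod m = l" using l by (simp_all add: le_mod_geq)
    moreover have "l mod 4 = (if m mod 4 = 1 then 3 else 1)" using \<open>odd m\<close> unfolding l by presburger
    ultimately show ?thesis using l unfolding pair_swap_displacement weight_offset_def by auto
  next
    case 3
    define j where "j = i - 1"
    have j: "i = j + 1" "j + 2 < m" using 3 by (simp_all add: j_def)
    have "(i + 1) mod m = j + 2" "(i + m - 1) mod m = j" using j by simp_all
    moreover have "j mod 4 = 0 \<or> j mod 4 = 1 \<or> j mod 4 = 2 \<or> j mod 4 = 3" by presburger
    moreover have "(j + 2) mod 4 = (j mod 4 + 2) mod 4" by presburger
    moreover have "j + 3 = m \<Longrightarrow> even j \<and> m mod 4 = (j mod 4 + 3) mod 4"
      using \<open>odd m\<close> by presburger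
    moreover have "even j \<longleftrightarrow> j mod 4 = 0 \<or> j mod 4 = 2" by presburger
    ultimately show ?thesis using j unfolding pair_swap_displacement weight_offset_def
      by (auto split: if_splits)
  qed
qed

definition swap_labeling :: "nat \<Rightarrow> nat \<Rightarrow> nat \<times> nat \<Rightarrow> nat" where
  "swap_labeling m n = row_labeling m ((balanced_row m n)(0 := pair_swap m))"

lemma bij_swap_labeling:
  assumes "odd m"
  shows "bij_betw (swap_labeling m n) ({0..<m} \<times> {0..<n}) {1..card ({0..<m} \<times> {0..<n})}"
  unfolding swap_labeling_def card_cartesian_product card_atLeastLessThan diff_zero
  by (rule bij_row_labeling) (simp add: bij_pair_swap bij_balanced_row[OF assms])

lemma column_sum_swap_labeling:
  assumes "0 < n"
  shows "int (\<Sum>j<n. swap_labeling m n (k, j))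
    = int (\<Sum>j<n. m * j + 1) + int (\<Sum>j<n. balanced_row m n j k) + (int (pair_swap m k) - int k)"
proof -
  obtain n' where n: "n = Suc n'" using assms gr0_implies_Suc by blast
  have "balanced_row m n 0 k = k" by (simp add: balanced_row_def)
  then have "(\<Sum>j<n. ((balanced_row m n)(0 := pair_swap m)) j k) + k
      = (\<Sum>j<n. balanced_row m n j k) + pair_swap m k"
    unfolding n sum.lessThan_Suc_shift by simp
  then show ?thesis
    unfolding swap_labeling_def sum_row_labeling_column by linarith
qed

lemma weight_swap_labeling:
  assumes "odd m" "3 \<le> m" "2 \<le> n"
  obtains c where "\<And>i j. i < m \<Longrightarrow>
    int (weight ({0..<m} \<times> {0..<n}) (lex_adj (cycle_adj m) empty_adj) (swap_labeling m n) (i, j))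
      = c + weight_offset m i"
proof -
  define C where "C = int (\<Sum>j<n. m * j + 1)
    + int (if odd n then 3 * (m div 2) + (n - 3) div 2 * (m - 1) else n div 2 * (m - 1))"
  have column: "int (\<Sum>h<n. swap_labeling m n (k, h)) = C + (int (pair_swap m k) - int k)"
    if "k < m" for k
    using column_sum_swap_labeling[of n m k] sum_balanced_rows[OF assms(1,3) that] assms
    by (simp add: C_def)
  have "int (weight ({0..<m} \<times> {0..<n}) (lex_adj (cycle_adj m) empty_adj) (swap_labeling m n) (i, j))
      = 2 * C + weight_offset m i" if "i < m" for i j
  proof -
    have "int (weight ({0..<m} \<times> {0..<n}) (lex_adj (cycle_adj m) empty_adj) (swap_labeling m n) (i, j))
        = int (\<Sum>h<n. swap_labeling m n ((i + 1) mod m, h))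
          + int (\<Sum>h<n. swap_labeling m n ((i + m - 1) mod m, h))"
      unfolding weight_cycle_lex_empty[OF assms(2) that] by (simp add: atLeast0LessThan)
    also have "\<dots> = C + (int (pair_swap m ((i + 1) mod m)) - int ((i + 1) mod m))
        + (C + (int (pair_swap m ((i + m - 1) mod m)) - int ((i + m - 1) mod m)))"
      using column[of "(i + 1) mod m"] column[of "(i + m - 1) mod m"] that by simp_all
    also have "\<dots> = 2 * C + weight_offset m i"
      using pair_swap_neighbour_displacements[OF assms(1,2) that] by simp
    finally show ?thesis .
  qed
  then show ?thesis using that by blast
qed

lemma ld_labeling_swap_labeling:
  assumes "odd m" "3 \<le> m" "2 \<le> n"
  shows "ld_labeling ({0..<m} \<times> {0..<n}) (lex_adj (cycle_adj m) empty_adj) (swap_labeling m n)"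
  unfolding ld_labeling_def
proof (intro conjI ballI impI)
  show "bij_betw (swap_labeling m n) ({0..<m} \<times> {0..<n}) {1..card ({0..<m} \<times> {0..<n})}"
    using bij_swap_labeling[OF assms(1)] .
next
  fix u v
  assume "u \<in> {0..<m} \<times> {0..<n}" "v \<in> {0..<m} \<times> {0..<n}"
    and "lex_adj (cycle_adj m) empty_adj u v"
  moreover obtain a b c d where u: "u = (a, b)" and v: "v = (c, d)" by fastforce
  ultimately have "a < m" "c < m" and "c = (a + 1) mod m \<or> a = (c + 1) mod m"
    by (auto simp: lex_adj_def empty_adj_def cycle_adj_def)
  then have "weight_offset m a \<noteq> weight_offset m c"
    using weight_offset_succ_ne[OF assms(1,2)] by metis
  moreover obtain w where "\<And>i j. i < m \<Longrightarrow>
    int (weight ({0..<m} \<times> {0..<n}) (lex_adj (cycle_adj m) empty_adj) (swap_labeling m n) (i, j))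
      = w + weight_offset m i"
    using weight_swap_labeling[OF assms] by blast
  ultimately show "weight ({0..<m} \<times> {0..<n}) (lex_adj (cycle_adj m) empty_adj) (swap_labeling m n) u
    \<noteq> weight ({0..<m} \<times> {0..<n}) (lex_adj (cycle_adj m) empty_adj) (swap_labeling m n) v"
    unfolding u v using \<open>a < m\<close> \<open>c < m\<close> by (metis add_left_cancel)
qed

lemma card_weights_swap_labeling_le:
  assumes "odd m" "3 \<le> m" "2 \<le> n"
  shows "card (weight ({0..<m} \<times> {0..<n}) (lex_adj (cycle_adj m) empty_adj) (swap_labeling m n)
    ` ({0..<m} \<times> {0..<n})) \<le> 3"
proof -
  let ?w = "weight ({0..<m} \<times> {0..<n}) (lex_adj (cycle_adj m) empty_adj) (swap_labeling m n)"
  obtain c where w: "\<And>i j. i < m \<Longrightarrow> int (?w (i, j)) = c + weight_offset m i"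
    using weight_swap_labeling[OF assms] by blast
  have "int ` ?w ` ({0..<m} \<times> {0..<n}) \<subseteq> (+) c ` {-1, 0, 1}"
    using w weight_offset_range by fastforce
  then have "card (int ` ?w ` ({0..<m} \<times> {0..<n})) \<le> card ((+) c ` {-1, 0, 1})"
    by (rule card_mono[rotated]) simp
  also have "\<dots> \<le> 3"
    using card_image_le[of "{-1, 0, 1}" "(+) c"] by simp
  finally show ?thesis by (simp add: card_image)
qed

lemma chi_ld_odd_cycle_lex_empty:
  assumes "odd m" "3 \<le> m" "2 \<le> n"
  shows "chi_ld ({0..<m} \<times> {0..<n}) (lex_adj (cycle_adj m) empty_adj) = 3"
proof -
  let ?V = "{0..<m} \<times> {0..<n}" and ?E = "lex_adj (cycle_adj m) empty_adj"
  have lower: "3 \<le> card (weight ?V ?E f ` ?V)" if "ld_labeling ?V ?E f" for f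
    using card_weights_odd_cycle_lex_empty_ge[OF assms(1,2) _ that] assms(3) by simp
  show ?thesis
    unfolding chi_ld_def
  proof (rule Least_equality)
    show "\<exists>f. ld_labeling ?V ?E f \<and> card (weight ?V ?E f ` ?V) = 3"
      using ld_labeling_swap_labeling[OF assms] card_weights_swap_labeling_le[OF assms] lower
      by (meson le_antisym)
  qed (use lower in blast)
qed

theorem mainTheorem14:
  fixes m n :: nat
  assumes "m \<ge> 5" and "odd m" and "n \<ge> 3"
  shows "chi_ld ({0..<m} \<times> {0..<n}) (lex_adj (cycle_adj m) empty_adj) = 3"
  using chi_ld_odd_cycle_lex_empty assms by simp

end
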